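(* Let $M$ be a randomized mechanism with discrete output distributions and let $D_0,D_1$ be worst-case neighboring inputs for $M$. Write $A=M(D_0)$, $B=M(D_1)$. Let $n\ge1$ and $\varepsilon>0$, and define for distributions $P,Q\in\{A,B\}$: $$\beta_\infty^{P,Q}=\Pr_{o\sim P}\big[\mathcal L_{P/Q}(o)=\infty\big],\qquad \Gamma_\lambda(P\|Q)=\log\sum_{o:\ \Pr[P=o]\neq0,\ \Pr[Q=o]\neq0}\Pr[P=o]\Big(\frac{\Pr[P=o]}{\Pr[Q=o]}\Big)^{\lambda},$$ $$\delta^{MA}_{P,Q}(\varepsilon)=\min_{\lambda>0}\Big(1-\big[1-\beta_\infty^{P,Q}\big]^n+e^{\,n\Gamma_\lambda(P\|Q)-\lambda\varepsilon}\Big).$$ Then the mechanism consisting of $n$ independent invocations of $M$ on the same input is $(\varepsilon,\delta)$-ADP with $\delta=\max\big(\delta^{MA}_{A,B}(\varepsilon),\delta^{MA}_{B,A}(\varepsilon)\big)$.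
   Context: Privacy loss: for output distributions $P,Q$ and output $o$, $\mathcal L_{P/Q}(o)=\infty$ if $\Pr[P=o]\ne0$ and $\Pr[Q=o]=0$; $\mathcal L_{P/Q}(o)=\ln(\Pr[P=o]/\Pr[Q=o])$ if both are nonzero; $-\infty$ otherwise. For neighboring $D,D'$ let $c(o)=\mathcal L_{M(D)/M(D')}(o)$, $\beta_\infty(D,D')=\Pr_{o\sim M(D)}[c(o)=\infty]$ and $\alpha(\lambda;D,D')=\log\mathbb E_{o\sim M(D)}[e^{\lambda c(o)}\mid c(o)\ne\pm\infty]$. Neighboring inputs $D_0,D_1$ are worst-case for $M$ if there is $k\in\{0,1\}$ such that for all $\lambda>0$ and all neighboring $D,D'$: $\alpha(\lambda;D_k,D_{1-k})\ge\alpha(\lambda;D,D')$ and $\beta_\infty(D_k,D_{1-k})\ge\beta_\infty(D,D')$. A mechanism $N$ is $(\varepsilon,\delta)$-ADP if for all output sets $S$ and all neighboring $D,D'$: $\Pr[N(D)\in S]\le e^\varepsilon\Pr[N(D')\in S]+\delta$. *)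

theory Defs
  imports "HOL-Probability.Probability"
begin

definition eln :: "ennreal \<Rightarrow> ereal" where
  "eln x = (if x = 0 then -\<infinity> else if x = \<top> then \<infinity> else ereal (ln (enn2real x)))"

fun eexp :: "ereal \<Rightarrow> ennreal" where
  "eexp (ereal r) = ennreal (exp r)"
| "eexp PInfty = \<top>"
| "eexp MInfty = 0"

definition privacy_loss :: "'o pmf \<Rightarrow> 'o pmf \<Rightarrow> 'o \<Rightarrow> ereal" where
  "privacy_loss P Q x =
     (if pmf P x \<noteq> 0 \<and> pmf Q x = 0 then \<infinity>
      else if pmf P x \<noteq> 0 \<and> pmf Q x \<noteq> 0 then ereal (ln (pmf P x / pmf Q x))
      else -\<infinity>)"

definition beta_inf :: "'o pmf \<Rightarrow> 'o pmf \<Rightarrow> real" where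
  "beta_inf P Q = measure_pmf.prob P {x. privacy_loss P Q x = \<infinity>}"

text \<open>alpha(lambda) = log E_{x ~ P}[exp(lambda c(x)) | c(x) finite]
  (conditional expectation = restricted expectation divided by the probability of the event).\<close>
definition alpha :: "real \<Rightarrow> 'o pmf \<Rightarrow> 'o pmf \<Rightarrow> ereal" where
  "alpha lam P Q =
     (let F = {x. privacy_loss P Q x \<noteq> \<infinity> \<and> privacy_loss P Q x \<noteq> -\<infinity>} in
      eln ((\<integral>\<^sup>+ x. indicator F x * ennreal (exp (lam * real_of_ereal (privacy_loss P Q x))) \<partial>measure_pmf P)
           / emeasure (measure_pmf P) F))"

definition worst_case :: "('d \<Rightarrow> 'd \<Rightarrow> bool) \<Rightarrow> ('d \<Rightarrow> 'o pmf) \<Rightarrow> 'd \<Rightarrow> 'd \<Rightarrow> bool" where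
  "worst_case neighbor M D0 D1 \<longleftrightarrow> neighbor D0 D1 \<and>
     (\<exists>k::nat \<in> {0,1}.
        let Dk = (if k = 0 then D0 else D1); Dk' = (if k = 0 then D1 else D0) in
        \<forall>lam>0. \<forall>D D'. neighbor D D' \<longrightarrow>
           alpha lam (M Dk) (M Dk') \<ge> alpha lam (M D) (M D') \<and>
           beta_inf (M Dk) (M Dk') \<ge> beta_inf (M D) (M D'))"

definition ADP :: "('d \<Rightarrow> 'd \<Rightarrow> bool) \<Rightarrow> ('d \<Rightarrow> 'r pmf) \<Rightarrow> real \<Rightarrow> ennreal \<Rightarrow> bool" where
  "ADP neighbor N eps delta \<longleftrightarrow>
     (\<forall>S D D'. neighbor D D' \<longrightarrow>
        ennreal (measure_pmf.prob (N D) S) \<le> ennreal (exp eps * measure_pmf.prob (N D') S) + delta)"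

definition Gamma :: "real \<Rightarrow> 'o pmf \<Rightarrow> 'o pmf \<Rightarrow> ereal" where
  "Gamma lam P Q = eln (\<integral>\<^sup>+ x \<in> {x. pmf P x \<noteq> 0 \<and> pmf Q x \<noteq> 0}.
       ennreal (pmf P x * (pmf P x / pmf Q x) powr lam) \<partial>count_space UNIV)"

definition delta_MA :: "nat \<Rightarrow> 'o pmf \<Rightarrow> 'o pmf \<Rightarrow> real \<Rightarrow> ennreal" where
  "delta_MA n P Q eps = (INF lam \<in> {0<..}.
      ennreal (1 - (1 - beta_inf P Q) ^ n) + eexp (ereal (real n) * Gamma lam P Q - ereal (lam * eps)))"

end

theory Submission
  imports Defs
begin

(*
  For pmfs P, Q and lam > 0, the Chernoff-type pointwise estimate
  P x <= e^eps Q x + P x (P x / Q x)^lam e^(-lam eps) on the common support (and the trivial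
  P x <= P x where Q x = 0) sums to
    Pr_P[S] <= e^eps Pr_Q[S] + beta_inf + E_P[(P/Q)^lam] e^(-lam eps).
  Under n independent repetitions the probability 1 - beta_inf of finite loss and the moment
  E_P[(P/Q)^lam] = exp Gamma_lam are both raised to the n-th power, which gives exactly the
  summand of delta_MA at lam. With b = 1 - beta_inf and a = exp alpha(lam) = exp Gamma_lam / b
  that summand is 1 - b^n (1 - a^n e^(-lam eps)), which is increasing in beta_inf and alpha as
  long as it stays below 1; as probabilities never exceed 1, the worst-case pair therefore
  dominates every neighbouring pair.
*)

lemma eexp_minus_infinity [simp]: "eexp (- \<infinity>) = 0"
  by (simp flip: MInfty_eq_minfinity)

lemma eexp_infinity [simp]: "eexp \<infinity> = \<top>"
  by (simp flip: PInfty_eq_infinity)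

lemma eln_le_eln_iff: "eln a \<le> eln b \<longleftrightarrow> a \<le> b"
proof (cases a rule: ennreal_cases)
  case (real x)
  show ?thesis
  proof (cases b rule: ennreal_cases)
    case (real y)
    then show ?thesis using \<open>a = ennreal x\<close> \<open>0 \<le> x\<close>
      by (cases "x = 0"; cases "y = 0") (auto simp: eln_def)
  qed (use real in \<open>auto simp: eln_def\<close>)
qed (auto simp: eln_def top_unique)

lemma eexp_times_eln:
  "eexp (ereal (real n) * eln g - ereal c) = g ^ n * ennreal (exp (- c))"
proof (cases g rule: ennreal_cases)
  case (real r)
  show ?thesis
  proof (cases "n = 0 \<or> r = 0")
    case True
    then show ?thesis using real by (auto simp: eln_def zero_ereal_def)
  next
    case False
    then have "exp (real n * ln r - c) = r ^ n * exp (- c)"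
      using real by (simp add: exp_diff exp_minus field_simps ln_realpow[symmetric])
    then show ?thesis using real False by (simp add: eln_def ennreal_power ennreal_mult)
  qed
next
  case top
  then show ?thesis
    by (cases "n = 0") (auto simp: eln_def zero_ereal_def ennreal_top_mult power_eq_top_ennreal)
qed

lemma ennreal_add_INF:
  fixes f :: "'a \<Rightarrow> ennreal"
  assumes "I \<noteq> {}"
  shows "c + (INF i\<in>I. f i) = (INF i\<in>I. c + f i)"
proof -
  have "c + Inf (f ` I) = (INF s\<in>f ` I. c + s)"
    by (rule continuous_at_Inf_mono)
       (use assms in \<open>auto simp: mono_def add_left_mono intro: continuous_intros\<close>)
  then show ?thesis by (simp add: image_comp)
qed

lemma le_exp_mult_add_ratio_powr:
  fixes p q lam eps :: real
  assumes "0 < p" "0 < q" "0 < lam"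
  shows "p \<le> exp eps * q + p * (p / q) powr lam * exp (- (lam * eps))"
proof (cases "p \<le> exp eps * q")
  case False
  then have "1 \<le> p / (q * exp eps)" using assms by (simp add: field_simps)
  then have "1 \<le> (p / (q * exp eps)) powr lam" using assms by (simp add: ge_one_powr_ge_zero)
  also have "\<dots> = ((p / q) * exp (- eps)) powr lam"
    by (simp add: exp_minus field_simps)
  also have "\<dots> = (p / q) powr lam * exp (- (lam * eps))"
    using assms by (subst powr_mult) (auto simp: powr_def)
  finally have "p \<le> p * ((p / q) powr lam * exp (- (lam * eps)))"
    using assms by simp
  then show ?thesis using assms by (simp add: mult.assoc add_increasing)
qed (simp add: add_increasing2 assms less_imp_le)

lemma min_affine_one_le:
  fixes t t0 :: ennreal and u u0 :: real
  assumes "0 \<le> u0" "u0 \<le> u" "u \<le> 1" "t \<le> t0"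
  shows "min (ennreal (1 - u) + ennreal u * t) 1 \<le> ennreal (1 - u0) + ennreal u0 * t0"
proof (cases "1 \<le> t0")
  case True
  have "ennreal (1 - u0) + ennreal u0 * 1 \<le> ennreal (1 - u0) + ennreal u0 * t0"
    using True by (intro add_left_mono mult_left_mono) auto
  then show ?thesis
    using assms by (simp flip: ennreal_plus add: min.coboundedI2)
next
  case False
  then obtain r0 where r0: "t0 = ennreal r0" "0 \<le> r0" "r0 < 1"
    by (metis ennreal_cases ennreal_less_one_iff not_le top_greatest)
  then obtain r where r: "t = ennreal r" "0 \<le> r" "r \<le> r0"
    using assms(4) by (metis ennreal_cases ennreal_le_iff le_ennreal_iff)
  have "u0 * (1 - r0) \<le> u * (1 - r)"
    using assms r r0 by (intro mult_mono) auto
  then have "1 - u + u * r \<le> 1 - u0 + u0 * r0" by (simp add: algebra_simps)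
  then have "ennreal (1 - u) + ennreal u * t \<le> ennreal (1 - u0) + ennreal u0 * t0"
    using assms r r0 by (simp flip: ennreal_plus ennreal_mult add: ennreal_leI)
  then show ?thesis by (simp add: min.coboundedI1)
qed

lemma min_one_minus_power_add_le:
  fixes G G0 :: ennreal and b b0 e :: real
  assumes "0 \<le> b0" "b0 \<le> b" "b \<le> 1" "G / ennreal b \<le> G0 / ennreal b0"
  shows "min (ennreal (1 - b ^ n) + G ^ n * ennreal e) 1 \<le> ennreal (1 - b0 ^ n) + G0 ^ n * ennreal e"
proof (cases "n = 0 \<or> b0 = 0")
  case True
  then show ?thesis by (cases "n = 0") (auto simp: power_0_left min.coboundedI2 add_increasing2)
next
  case False
  then have "0 < b0" "0 < b" using assms by auto
  have power_eq: "H ^ n * ennreal e = ennreal (c ^ n) * ((H / ennreal c) ^ n * ennreal e)"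
    if "0 < c" for H :: ennreal and c :: real
  proof -
    have "H = ennreal c * (H / ennreal c)"
      using that by (simp add: ennreal_times_divide mult.commute[of _ H] ennreal_mult_divide_eq)
    then show ?thesis
      by (metis ennreal_power mult.assoc power_mult_distrib that less_imp_le)
  qed
  show ?thesis
    unfolding power_eq[OF \<open>0 < b\<close>, of G] power_eq[OF \<open>0 < b0\<close>, of G0]
    using assms by (intro min_affine_one_le mult_right_mono power_mono power_le_one) auto
qed

text \<open>The integrand vanishes off the common support of P and Q because x / 0 = 0 and 0 powr lam = 0.\<close>

definition loss_mgf :: "'o pmf \<Rightarrow> 'o pmf \<Rightarrow> real \<Rightarrow> ennreal" where
  "loss_mgf P Q lam = (\<integral>\<^sup>+ x. ennreal ((pmf P x / pmf Q x) powr lam) \<partial>measure_pmf P)"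

lemma beta_inf_eq_prob_pmf_zero: "beta_inf P Q = measure_pmf.prob P {x. pmf Q x = 0}"
  unfolding beta_inf_def by (rule measure_prob_cong_0) (auto simp: privacy_loss_def split: if_splits)

lemma one_minus_beta_inf: "1 - beta_inf P Q = measure_pmf.prob P {x. pmf Q x \<noteq> 0}"
  using measure_pmf.prob_compl[of "{x. pmf Q x \<noteq> 0}" P]
  by (simp add: beta_inf_eq_prob_pmf_zero Compl_eq_Diff_UNIV[symmetric] Collect_neg_eq[symmetric])

lemma Gamma_eq_eln_loss_mgf: "Gamma lam P Q = eln (loss_mgf P Q lam)"
  unfolding Gamma_def loss_mgf_def nn_integral_measure_pmf
  by (auto intro!: arg_cong[where f = eln] nn_integral_cong
      simp: indicator_def ennreal_mult[symmetric])

lemma alpha_eq_eln_loss_mgf: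
  "alpha lam P Q = eln (loss_mgf P Q lam / ennreal (1 - beta_inf P Q))"
proof -
  define F where "F = {x. privacy_loss P Q x \<noteq> \<infinity> \<and> privacy_loss P Q x \<noteq> - \<infinity>}"
  have "(\<integral>\<^sup>+ x. indicator F x * ennreal (exp (lam * real_of_ereal (privacy_loss P Q x))) \<partial>measure_pmf P)
      = loss_mgf P Q lam"
    unfolding loss_mgf_def
    by (rule nn_integral_cong) (auto simp: F_def privacy_loss_def powr_def indicator_def)
  moreover have "measure_pmf.prob P F = 1 - beta_inf P Q"
    unfolding one_minus_beta_inf F_def
    by (rule measure_prob_cong_0) (auto simp: privacy_loss_def split: if_splits)
  ultimately show ?thesis
    unfolding alpha_def Let_def F_def[symmetric] by (simp add: measure_pmf.emeasure_eq_measure)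
qed

lemma pmf_replicate_pmf:
  "pmf (replicate_pmf n P) xs = (if length xs = n then prod_list (map (pmf P) xs) else 0)"
proof (induction n arbitrary: xs)
  case 0
  then show ?case by (cases xs) (auto simp: indicator_def)
next
  case (Suc n)
  have replicate_Suc:
    "replicate_pmf (Suc n) P = map_pmf (\<lambda>(x, ys). x # ys) (pair_pmf P (replicate_pmf n P))"
    by (simp add: pair_pmf_def map_pmf_def bind_assoc_pmf bind_return_pmf)
  have inj: "inj (\<lambda>(x, ys). x # ys)" by (auto simp: inj_def)
  show ?case
  proof (cases xs)
    case Nil
    then show ?thesis unfolding replicate_Suc by (auto simp: pmf_map measure_pmf_zero_iff)
  next
    case (Cons y ys)
    then show ?thesis
      unfolding replicate_Suc using pmf_map_inj'[OF inj, of _ "(y, ys)"] Suc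
      by (simp add: pmf_pair)
  qed
qed

lemma nn_integral_replicate_pmf_prod_list:
  "(\<integral>\<^sup>+ xs. prod_list (map f xs) \<partial>measure_pmf (replicate_pmf n P)) = (\<integral>\<^sup>+ x. f x \<partial>measure_pmf P) ^ n"
proof (induction n)
  case (Suc n)
  then show ?case
    by (simp add: nn_integral_cmult nn_integral_multc mult.commute)
qed simp

lemma measure_replicate_pmf_lists:
  "measure_pmf.prob (replicate_pmf n P) (lists A) = measure_pmf.prob P A ^ n"
proof -
  have "prod_list (map (indicator A) xs) = (indicator (lists A) xs :: ennreal)" for xs
    by (induction xs) (auto simp: indicator_def)
  then have "emeasure (replicate_pmf n P) (lists A) = emeasure (measure_pmf P) A ^ n"
    using nn_integral_replicate_pmf_prod_list[where f = "indicator A"] by simp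
  then show ?thesis by (simp add: measure_pmf.emeasure_eq_measure ennreal_power)
qed

lemma beta_inf_replicate_pmf:
  "beta_inf (replicate_pmf n P) (replicate_pmf n Q) = 1 - (1 - beta_inf P Q) ^ n"
proof -
  have "1 - beta_inf (replicate_pmf n P) (replicate_pmf n Q)
      = measure_pmf.prob (replicate_pmf n P) (lists {x. pmf Q x \<noteq> 0})"
    unfolding one_minus_beta_inf
    by (rule measure_prob_cong_0) (auto simp: pmf_replicate_pmf prod_list_zero_iff split: if_splits)
  then show ?thesis
    by (simp add: measure_replicate_pmf_lists one_minus_beta_inf[symmetric])
qed

lemma ennreal_ratio_powr_prod_list:
  fixes f g :: "'a \<Rightarrow> real"
  assumes "\<And>x. 0 \<le> f x" "\<And>x. 0 \<le> g x"
  shows "ennreal ((prod_list (map f xs) / prod_list (map g xs)) powr lam)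
    = prod_list (map (\<lambda>x. ennreal ((f x / g x) powr lam)) xs)"
proof (induction xs)
  case (Cons x xs)
  have "0 \<le> prod_list (map f xs) / prod_list (map g xs)"
    using assms by (intro divide_nonneg_nonneg prod_list_nonneg) auto
  moreover have "0 \<le> f x / g x" using assms by simp
  ultimately show ?case
    using Cons.IH
    by (simp only: list.map prod_list.Cons times_divide_times_eq[symmetric] powr_mult)
       (simp add: ennreal_mult)
qed simp

lemma loss_mgf_replicate_pmf:
  "loss_mgf (replicate_pmf n P) (replicate_pmf n Q) lam = loss_mgf P Q lam ^ n"
  unfolding loss_mgf_def nn_integral_replicate_pmf_prod_list[symmetric]
  by (rule nn_integral_cong_AE)
     (auto simp: AE_measure_pmf_iff set_replicate_pmf pmf_replicate_pmf ennreal_ratio_powr_prod_list)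

lemma prob_le_loss_mgf_bound:
  assumes "0 < lam"
  shows "ennreal (measure_pmf.prob P S) \<le> ennreal (exp eps * measure_pmf.prob Q S)
    + ennreal (beta_inf P Q) + loss_mgf P Q lam * ennreal (exp (- (lam * eps)))"
proof -
  define Z where "Z = {x. pmf Q x = 0}"
  define r where "r x = ennreal ((pmf P x / pmf Q x) powr lam)" for x
  have pointwise: "ennreal (pmf P x) * indicator S x \<le>
      ennreal (exp eps) * (ennreal (pmf Q x) * indicator S x) + ennreal (pmf P x) * indicator Z x
      + ennreal (pmf P x) * r x * ennreal (exp (- (lam * eps)))" for x
  proof (cases "x \<in> S \<and> pmf P x \<noteq> 0 \<and> pmf Q x \<noteq> 0")
    case True
    then have "pmf P x \<le> exp eps * pmf Q x + pmf P x * (pmf P x / pmf Q x) powr lam * exp (- (lam * eps))"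
      using assms by (intro le_exp_mult_add_ratio_powr) (auto simp: order_less_le)
    then show ?thesis
      using True by (simp add: r_def Z_def ennreal_leI flip: ennreal_mult ennreal_plus)
  qed (auto simp: Z_def indicator_def add_increasing2)
  have "ennreal (measure_pmf.prob P S) = (\<integral>\<^sup>+ x. ennreal (pmf P x) * indicator S x \<partial>count_space UNIV)"
    by (simp add: measure_pmf.emeasure_eq_measure[symmetric] nn_integral_measure_pmf[symmetric])
  also have "\<dots> \<le> (\<integral>\<^sup>+ x. ennreal (exp eps) * (ennreal (pmf Q x) * indicator S x)
      + ennreal (pmf P x) * indicator Z x + ennreal (pmf P x) * r x * ennreal (exp (- (lam * eps)))
      \<partial>count_space UNIV)"
    by (rule nn_integral_mono) (rule pointwise)
  also have "\<dots> = ennreal (exp eps) * (\<integral>\<^sup>+ x. ennreal (pmf Q x) * indicator S x \<partial>count_space UNIV)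
      + (\<integral>\<^sup>+ x. ennreal (pmf P x) * indicator Z x \<partial>count_space UNIV)
      + (\<integral>\<^sup>+ x. ennreal (pmf P x) * r x \<partial>count_space UNIV) * ennreal (exp (- (lam * eps)))"
    by (simp add: nn_integral_add nn_integral_cmult nn_integral_multc)
  also have "\<dots> = ennreal (exp eps * measure_pmf.prob Q S) + ennreal (beta_inf P Q)
      + loss_mgf P Q lam * ennreal (exp (- (lam * eps)))"
    by (simp add: loss_mgf_def r_def Z_def beta_inf_eq_prob_pmf_zero ennreal_mult
        measure_pmf.emeasure_eq_measure[symmetric] nn_integral_measure_pmf[symmetric])
  finally show ?thesis .
qed

definition delta_MA_at :: "nat \<Rightarrow> 'o pmf \<Rightarrow> 'o pmf \<Rightarrow> real \<Rightarrow> real \<Rightarrow> ennreal" where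
  "delta_MA_at n P Q eps lam =
     ennreal (1 - (1 - beta_inf P Q) ^ n) + eexp (ereal (real n) * Gamma lam P Q - ereal (lam * eps))"

lemma delta_MA_eq_INF: "delta_MA n P Q eps = (INF lam\<in>{0<..}. delta_MA_at n P Q eps lam)"
  by (simp add: delta_MA_def delta_MA_at_def)

lemma delta_MA_at_eq:
  "delta_MA_at n P Q eps lam
     = ennreal (1 - (1 - beta_inf P Q) ^ n) + loss_mgf P Q lam ^ n * ennreal (exp (- (lam * eps)))"
  by (simp add: delta_MA_at_def Gamma_eq_eln_loss_mgf eexp_times_eln)

lemma prob_replicate_pmf_le_delta_MA_at:
  assumes "0 < lam"
  shows "ennreal (measure_pmf.prob (replicate_pmf n P) S)
    \<le> ennreal (exp eps * measure_pmf.prob (replicate_pmf n Q) S) + delta_MA_at n P Q eps lam"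
  using prob_le_loss_mgf_bound[OF assms, of "replicate_pmf n P" S eps "replicate_pmf n Q"]
  by (simp add: beta_inf_replicate_pmf loss_mgf_replicate_pmf delta_MA_at_eq add.assoc)

lemma min_delta_MA_at_le:
  assumes "beta_inf P Q \<le> beta_inf P0 Q0" "alpha lam P Q \<le> alpha lam P0 Q0"
  shows "min (delta_MA_at n P Q eps lam) 1 \<le> delta_MA_at n P0 Q0 eps lam"
  unfolding delta_MA_at_eq
proof (rule min_one_minus_power_add_le)
  show "0 \<le> 1 - beta_inf P0 Q0" "1 - beta_inf P Q \<le> 1"
    by (simp_all add: beta_inf_def)
  show "1 - beta_inf P0 Q0 \<le> 1 - beta_inf P Q" using assms(1) by simp
  show "loss_mgf P Q lam / ennreal (1 - beta_inf P Q) \<le> loss_mgf P0 Q0 lam / ennreal (1 - beta_inf P0 Q0)"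
    using assms(2) by (simp add: alpha_eq_eln_loss_mgf eln_le_eln_iff)
qed

lemma worst_caseE:
  assumes "worst_case neighbor M D0 D1"
  obtains P0 Q0 where "(P0, Q0) \<in> {(M D0, M D1), (M D1, M D0)}"
    and "\<And>lam D D'. 0 < lam \<Longrightarrow> neighbor D D' \<Longrightarrow>
      alpha lam (M D) (M D') \<le> alpha lam P0 Q0 \<and> beta_inf (M D) (M D') \<le> beta_inf P0 Q0"
proof -
  from assms obtain k :: nat where "k \<in> {0, 1}" and worst:
    "\<forall>lam>0. \<forall>D D'. neighbor D D' \<longrightarrow>
       alpha lam (M D) (M D') \<le> alpha lam (M (if k = 0 then D0 else D1)) (M (if k = 0 then D1 else D0)) \<and>
       beta_inf (M D) (M D') \<le> beta_inf (M (if k = 0 then D0 else D1)) (M (if k = 0 then D1 else D0))"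
    unfolding worst_case_def Let_def by blast
  show ?thesis
    by (rule that[of "M (if k = 0 then D0 else D1)" "M (if k = 0 then D1 else D0)"]) (use worst in auto)
qed

lemma prob_replicate_pmf_le_delta_MA_of_dominating:
  assumes "\<And>lam. 0 < lam \<Longrightarrow> alpha lam P Q \<le> alpha lam P0 Q0 \<and> beta_inf P Q \<le> beta_inf P0 Q0"
  shows "ennreal (measure_pmf.prob (replicate_pmf n P) S)
    \<le> ennreal (exp eps * measure_pmf.prob (replicate_pmf n Q) S) + delta_MA n P0 Q0 eps"
proof -
  define X where "X = ennreal (measure_pmf.prob (replicate_pmf n P) S)"
  define c where "c = ennreal (exp eps * measure_pmf.prob (replicate_pmf n Q) S)"
  have "X \<le> c + delta_MA_at n P0 Q0 eps lam" if "0 < lam" for lam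
  proof -
    have "X \<le> min (c + delta_MA_at n P Q eps lam) 1"
      using prob_replicate_pmf_le_delta_MA_at[OF that] by (simp add: X_def c_def)
    also have "\<dots> \<le> c + min (delta_MA_at n P Q eps lam) 1"
      by (cases "delta_MA_at n P Q eps lam \<le> 1")
         (auto simp: min.absorb1 min.absorb2 intro: min.coboundedI1 min.coboundedI2 add_increasing)
    also have "\<dots> \<le> c + delta_MA_at n P0 Q0 eps lam"
      using assms[OF that] by (intro add_left_mono min_delta_MA_at_le) auto
    finally show ?thesis .
  qed
  then show ?thesis
    unfolding X_def[symmetric] c_def[symmetric] delta_MA_eq_INF
    by (subst ennreal_add_INF) (auto intro: INF_greatest)
qed

theorem proposition1:
  fixes neighbor :: "'d \<Rightarrow> 'd \<Rightarrow> bool" and M :: "'d \<Rightarrow> 'o pmf"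
    and D0 D1 :: 'd and n :: nat and eps :: real
  assumes "worst_case neighbor M D0 D1"
    and "n \<ge> 1" and "eps > 0"
  shows "ADP neighbor (\<lambda>D. replicate_pmf n (M D)) eps
           (max (delta_MA n (M D0) (M D1) eps) (delta_MA n (M D1) (M D0) eps))"
proof -
  \<comment> \<open>The bound holds for every n and eps.\<close>
  obtain P0 Q0 where pair: "(P0, Q0) \<in> {(M D0, M D1), (M D1, M D0)}"
    and worst: "\<And>lam D D'. 0 < lam \<Longrightarrow> neighbor D D' \<Longrightarrow>
      alpha lam (M D) (M D') \<le> alpha lam P0 Q0 \<and> beta_inf (M D) (M D') \<le> beta_inf P0 Q0"
    using worst_caseE[OF assms(1)] by blast
  have "delta_MA n P0 Q0 eps \<le> max (delta_MA n (M D0) (M D1) eps) (delta_MA n (M D1) (M D0) eps)"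
    using pair by auto
  then show ?thesis
    unfolding ADP_def
    using prob_replicate_pmf_le_delta_MA_of_dominating[OF worst]
    by (meson add_left_mono order_trans)
qed

end
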